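(* Let $\mathcal{X}=\{\mathbf{x}_1,\dots,\mathbf{x}_N\}\subset\mathbb{R}^d$, and for weights $\pi=(\pi_1,\dots,\pi_N)$ with $\pi_j>0$, $\sum_j\pi_j=1$, and bandwidths $\sigma\in(0,\infty)^N$ consider the $\pi$-KDE model $p_{\pi\text{-KDE}}(\mathbf{x};\pi,\sigma)=\sum_j\pi_j\mathcal{N}(\mathbf{x};\mathbf{x}_j,\sigma_j^2\mathbf{I})$, with total log-likelihood $L(\pi,\sigma)=\sum_i\log p_{\pi\text{-KDE}}(\mathbf{x}_i;\pi,\sigma)$ and leave-one-out total log-likelihood $L_{\text{LOO}}(\pi,\sigma)=\sum_i\log\sum_{j\ne i}\pi_j\mathcal{N}(\mathbf{x}_i;\mathbf{x}_j,\sigma_j^2\mathbf{I})$. Then: (i) For any index $j'$ and any fixed $\pi$ and fixed $\sigma_j>0$ ($j\ne j'$), $L(\pi,\sigma)\to+\infty$ as $\sigma_{j'}\to0^+$; conversely, if $\sigma_j\ge\varepsilon>0$ for all $j$ then $L(\pi,\sigma)$ is bounded above by a constant depending only on $N,d,\varepsilon$ (uniformly in $\pi$), so $L(\pi^{(n)},\sigma^{(n)})\to+\infty$ forces $\min_j\sigma^{(n)}_j\to0$. (ii) If $N\ge2$ and the points of $\mathcal{X}$ are pairwise distinct, then $L_{\text{LOO}}$ is bounded above on the set of all admissible $(\pi,\sigma)$. (iii) If $N\ge2$ and the points of $\mathcal{X}$ are pairwise distinct, there exists $\varepsilon>0$ depending only on the dataset such that every maximizer $(\pi^*,\sigma^*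 )$ of $L_{\text{LOO}}$ over admissible $(\pi,\sigma)$ satisfies $\sigma^*_j\ge\varepsilon$ for all $j$ (no data-copying).
   Context: $\mathcal{N}(\mathbf{x};\boldsymbol\mu,\sigma^2\mathbf{I})=(2\pi\sigma^2)^{-d/2}\exp\!\big(-\lVert\mathbf{x}-\boldsymbol\mu\rVert^2/(2\sigma^2)\big)$ denotes the isotropic Gaussian density on $\mathbb{R}^d$. The $\pi$-KDE model is a Gaussian mixture with fixed centres at the data points, individual positive weights $\pi_j$ summing to one, and individual bandwidths $\sigma_j$; the adaptive KDE is the special case $\pi_j=1/N$. "Data-copying" means that some bandwidth $\sigma_j\to0^+$. *)

theory Defs
  imports "HOL-Analysis.Analysis"
begin

definition gauss :: "'a::euclidean_space \<Rightarrow> 'a \<Rightarrow> real \<Rightarrow> real" where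
  "gauss x mu s = (2 * pi * s\<^sup>2) powr (- real DIM('a) / 2) * exp (- (norm (x - mu))\<^sup>2 / (2 * s\<^sup>2))"

definition admissible :: "nat \<Rightarrow> (nat \<Rightarrow> real) \<Rightarrow> (nat \<Rightarrow> real) \<Rightarrow> bool" where
  "admissible N w s \<longleftrightarrow> (\<forall>j<N. w j > 0) \<and> (\<Sum>j<N. w j) = 1 \<and> (\<forall>j<N. s j > 0)"

definition pkde :: "nat \<Rightarrow> (nat \<Rightarrow> 'a::euclidean_space) \<Rightarrow> (nat \<Rightarrow> real) \<Rightarrow> (nat \<Rightarrow> real) \<Rightarrow> 'a \<Rightarrow> real" where
  "pkde N X w s x = (\<Sum>j<N. w j * gauss x (X j) (s j))"

definition loglik :: "nat \<Rightarrow> (nat \<Rightarrow> 'a::euclidean_space) \<Rightarrow> (nat \<Rightarrow> real) \<Rightarrow> (nat \<Rightarrow> real) \<Rightarrow> real" where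
  "loglik N X w s = (\<Sum>i<N. ln (pkde N X w s (X i)))"

definition loglik_loo :: "nat \<Rightarrow> (nat \<Rightarrow> 'a::euclidean_space) \<Rightarrow> (nat \<Rightarrow> real) \<Rightarrow> (nat \<Rightarrow> real) \<Rightarrow> real" where
  "loglik_loo N X w s = (\<Sum>i<N. ln (\<Sum>j\<in>{..<N} - {i}. w j * gauss (X i) (X j) (s j)))"

end

theory Submission
  imports Defs
begin

text \<open>
  On the diagonal, the component centred at \<open>x\<^sub>j\<close> contributes \<open>\<pi>\<^sub>j (2\<pi>\<sigma>\<^sub>j\<^sup>2)\<^sup>-\<^sup>d\<^sup>/\<^sup>2\<close> to the density
  at \<open>x\<^sub>j\<close>, which blows up as \<open>\<sigma>\<^sub>j \<rightarrow> 0\<close>; with all bandwidths at least \<open>\<epsilon>\<close>, every Gaussian is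
  at most \<open>(2\<pi>\<epsilon>\<^sup>2)\<^sup>-\<^sup>d\<^sup>/\<^sup>2\<close>, so \<open>L\<close> is bounded.
  Leaving out the diagonal removes the blow-up: off its centre, at distance \<open>r\<close>, a Gaussian is
  bounded by \<open>(d/(2\<pi>r\<^sup>2))\<^sup>d\<^sup>/\<^sup>2\<close> uniformly in the bandwidth, and as a function of \<open>\<sigma>\<close> it is strictly
  increasing while \<open>d\<sigma>\<^sup>2 < r\<^sup>2\<close>. Hence if the points are \<open>m\<close>-separated, raising any bandwidth below
  \<open>m/\<surd>d\<close> up to \<open>m/\<surd>d\<close> strictly increases \<open>L\<^sub>L\<^sub>O\<^sub>O\<close>, so maximisers never have such a bandwidth.
\<close>

lemma gauss_eq_exp:
  fixes x mu :: "'a::euclidean_space"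
  assumes "s \<noteq> 0"
  shows "gauss x mu s =
    exp (- real DIM('a) / 2 * ln (2 * pi * s\<^sup>2) + - (norm (x - mu))\<^sup>2 / (2 * s\<^sup>2))"
proof -
  have "(2 * pi * s\<^sup>2) powr (- real DIM('a) / 2) = exp (- real DIM('a) / 2 * ln (2 * pi * s\<^sup>2))"
    using assms by (simp add: powr_def)
  then show ?thesis
    unfolding gauss_def exp_add by simp
qed

lemma gauss_pos: "s \<noteq> 0 \<Longrightarrow> gauss x mu s > 0"
  by (simp add: gauss_def)

lemma gauss_nonneg: "gauss x mu s \<ge> 0"
  by (simp add: gauss_def)

lemma gauss_same_centre:
  fixes x :: "'a::euclidean_space"
  shows "gauss x x s = (2 * pi * s\<^sup>2) powr (- real DIM('a) / 2)"
  by (simp add: gauss_def)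

lemma gauss_le_of_bandwidth_ge:
  fixes x mu :: "'a::euclidean_space"
  assumes "0 < e" "e \<le> s"
  shows "gauss x mu s \<le> (2 * pi * e\<^sup>2) powr (- real DIM('a) / 2)"
proof -
  have "(2 * pi * s\<^sup>2) powr (- real DIM('a) / 2) \<le> (2 * pi * e\<^sup>2) powr (- real DIM('a) / 2)"
    using assms by (intro powr_mono2') (auto intro: power_mono)
  moreover have "exp (- (norm (x - mu))\<^sup>2 / (2 * s\<^sup>2)) \<le> 1" by simp
  ultimately show ?thesis
    unfolding gauss_def using mult_mono[of _ _ _ 1] by fastforce
qed

text \<open>From \<open>exp a \<ge> (a/k)\<^sup>k\<close> with \<open>k = d/2\<close> and \<open>a = r\<^sup>2/(2s\<^sup>2)\<close>.\<close>
lemma gauss_le_off_centre: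
  fixes x mu :: "'a::euclidean_space"
  assumes "x \<noteq> mu" "s \<noteq> 0"
  shows "gauss x mu s \<le> (real DIM('a) / (2 * pi * (norm (x - mu))\<^sup>2)) powr (real DIM('a) / 2)"
proof -
  define k where "k = real DIM('a) / 2"
  define a where "a = (norm (x - mu))\<^sup>2 / (2 * s\<^sup>2)"
  define P where "P = 2 * pi * s\<^sup>2"
  have k: "k > 0" and a: "a > 0" and P: "P > 0"
    using assms by (simp_all add: k_def a_def P_def)
  have "(a / k) powr k \<le> exp (a / k) powr k"
    using k a by (intro powr_mono2) (auto intro: order_trans[OF _ exp_ge_add_one_self])
  also have "\<dots> = exp a"
    using k by (simp add: powr_def)
  finally have "exp (- a) \<le> (k / a) powr k"
    using a k by (simp add: exp_minus powr_divide field_simps)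
  moreover have "gauss x mu s = P powr (- k) * exp (- a)"
    unfolding gauss_def k_def a_def P_def by simp
  ultimately have "gauss x mu s \<le> P powr (- k) * (k / a) powr k"
    by (simp add: mult_left_mono)
  also have "\<dots> = ((k / a) / P) powr k"
    using P a k by (simp add: powr_minus_divide powr_divide powr_mult mult.commute)
  also have "(k / a) / P = real DIM('a) / (2 * pi * (norm (x - mu))\<^sup>2)"
    unfolding k_def a_def P_def using assms by (simp add: field_simps)
  finally show ?thesis
    by (simp add: k_def)
qed

lemma gauss_strict_mono_bandwidth:
  fixes x mu :: "'a::euclidean_space"
  assumes "0 < s" "s < e" "real DIM('a) * e\<^sup>2 \<le> (norm (x - mu))\<^sup>2"
  shows "gauss x mu s < gauss x mu e"
proof -
  define d where "d = real DIM('a)"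
  define r2 where "r2 = (norm (x - mu))\<^sup>2"
  define q where "q = e\<^sup>2 / s\<^sup>2"
  have d: "d > 0" and e: "e > 0" and s2: "0 < s\<^sup>2" "s\<^sup>2 < e\<^sup>2"
    using assms by (auto simp: d_def intro: power_strict_mono)
  have q: "q > 1"
    unfolding q_def using s2 by simp
  have "ln q < q - 1"
    using q ln_le_minus_one[of q] ln_eq_minus_one[of q] by fastforce
  then have "d / 2 * ln q < d / 2 * (q - 1)"
    using d by simp
  also have "\<dots> = (d * e\<^sup>2) * ((e\<^sup>2 - s\<^sup>2) / (2 * s\<^sup>2 * e\<^sup>2))"
    unfolding q_def using s2 e by (simp add: field_simps)
  also have "\<dots> \<le> r2 * ((e\<^sup>2 - s\<^sup>2) / (2 * s\<^sup>2 * e\<^sup>2))"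
    using assms(3) s2 e unfolding d_def r2_def by (intro mult_right_mono) auto
  also have "\<dots> = r2 / (2 * s\<^sup>2) - r2 / (2 * e\<^sup>2)"
    using s2 e by (simp add: field_simps)
  finally have "d / 2 * ln q < r2 / (2 * s\<^sup>2) - r2 / (2 * e\<^sup>2)" .
  moreover have "ln q = ln (2 * pi * e\<^sup>2) - ln (2 * pi * s\<^sup>2)"
    unfolding q_def using e assms(1) by (simp add: ln_div ln_mult)
  ultimately show ?thesis
    using assms(1) e unfolding d_def r2_def by (simp add: gauss_eq_exp algebra_simps)
qed

lemma weighted_sum_le_bound:
  fixes w f :: "'b \<Rightarrow> real"
  assumes "\<forall>j\<in>A. 0 \<le> w j" "sum w A \<le> 1" "\<forall>j\<in>A. f j \<le> B" "0 \<le> B"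
  shows "(\<Sum>j\<in>A. w j * f j) \<le> B"
proof -
  have "(\<Sum>j\<in>A. w j * f j) \<le> (\<Sum>j\<in>A. w j * B)"
    using assms by (intro sum_mono mult_left_mono) auto
  also have "\<dots> = sum w A * B"
    by (simp add: sum_distrib_right)
  also have "\<dots> \<le> B"
    using assms by (simp add: mult_left_le_one_le sum_nonneg)
  finally show ?thesis .
qed

lemma loglik_ge_diagonal:
  fixes X :: "nat \<Rightarrow> 'a::euclidean_space"
  assumes "\<forall>j<N. w j > 0" "\<forall>j<N. s j > 0"
  shows "(\<Sum>i<N. ln (w i * gauss (X i) (X i) (s i))) \<le> loglik N X w s"
  unfolding loglik_def pkde_def
proof (intro sum_mono)
  fix i assume i: "i \<in> {..<N}"
  have "w i * gauss (X i) (X i) (s i) \<le> (\<Sum>j<N. w j * gauss (X i) (X j) (s j))"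
    using i assms by (intro member_le_sum[where f = "\<lambda>j. w j * gauss (X i) (X j) (s j)"])
      (auto intro: mult_nonneg_nonneg gauss_nonneg less_imp_le)
  moreover have "0 < w i * gauss (X i) (X i) (s i)"
    using i assms by (auto intro!: mult_pos_pos gauss_pos)
  ultimately show "ln (w i * gauss (X i) (X i) (s i)) \<le> ln (\<Sum>j<N. w j * gauss (X i) (X j) (s j))"
    by simp
qed

lemma loglik_tendsto_at_top_as_bandwidth_vanishes:
  fixes X :: "nat \<Rightarrow> 'a::euclidean_space"
  assumes j': "j' < N" and w: "\<forall>j<N. w j > 0" and s: "\<forall>j<N. j \<noteq> j' \<longrightarrow> s j > 0"
  shows "filterlim (\<lambda>t. loglik N X w (s(j' := t))) at_top (at_right 0)"
proof -
  define d where "d = real DIM('a)"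
  define c where "c = (\<Sum>i\<in>{..<N} - {j'}. ln (w i * gauss (X i) (X i) (s i)))"
  define C where "C = c + ln (w j') - d / 2 * ln (2 * pi)"
  have lower: "C - d * ln t \<le> loglik N X w (s(j' := t))" if t: "0 < t" for t
  proof -
    have "ln (w j' * gauss (X j') (X j') t) = ln (w j') + ln ((2 * pi * t\<^sup>2) powr (- d / 2))"
      using w j' t unfolding gauss_same_centre d_def by (subst ln_mult) auto
    also have "ln ((2 * pi * t\<^sup>2) powr (- d / 2)) = - d / 2 * (ln (2 * pi) + 2 * ln t)"
      using t by (simp add: ln_mult ln_realpow)
    finally have "ln (w j' * gauss (X j') (X j') t) = ln (w j') - d / 2 * ln (2 * pi) - d * ln t"
      by (simp add: algebra_simps)
    then have "(\<Sum>i<N. ln (w i * gauss (X i) (X i) ((s(j' := t)) i))) = C - d * ln t"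
      unfolding C_def c_def using j' by (subst sum.remove[of _ j']) (auto intro!: sum.cong)
    moreover have "(\<Sum>i<N. ln (w i * gauss (X i) (X i) ((s(j' := t)) i))) \<le> loglik N X w (s(j' := t))"
      using w s t by (intro loglik_ge_diagonal) auto
    ultimately show ?thesis by simp
  qed
  have "filterlim (\<lambda>t. C + d * - ln t) at_top (at_right (0::real))"
    by (intro filterlim_tendsto_add_at_top[OF tendsto_const] filterlim_tendsto_pos_mult_at_top[OF tendsto_const])
      (auto simp: d_def intro: filterlim_uminus_at_bot[THEN iffD1] ln_at_0)
  then show ?thesis
    by (rule filterlim_at_top_mono)
      (use lower in \<open>auto intro: eventually_mono[OF eventually_at_right_less[of 0]]\<close>)
qed

lemma loglik_le_of_bandwidth_ge:
  fixes Y :: "nat \<Rightarrow> 'a::euclidean_space"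
  assumes e: "0 < e" and adm: "admissible N w s" and se: "\<forall>j<N. e \<le> s j"
  shows "loglik N Y w s \<le> real N * ln ((2 * pi * e\<^sup>2) powr (- real DIM('a) / 2))"
proof -
  define G where "G = (2 * pi * e\<^sup>2) powr (- real DIM('a) / 2)"
  have w: "\<forall>j<N. w j > 0" "(\<Sum>j<N. w j) = 1" and s: "\<forall>j<N. s j > 0"
    using adm unfolding admissible_def by auto
  have "ln (pkde N Y w s (Y i)) \<le> ln G" if i: "i < N" for i
  proof -
    have "0 < pkde N Y w s (Y i)"
      unfolding pkde_def using i w s by (intro sum_pos) (auto intro!: mult_pos_pos gauss_pos)
    moreover have "\<forall>j<N. gauss (Y i) (Y j) (s j) \<le> G"
      unfolding G_def using gauss_le_of_bandwidth_ge[OF e] se by blast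
    then have "pkde N Y w s (Y i) \<le> G"
      unfolding pkde_def using w by (intro weighted_sum_le_bound) (auto simp: G_def less_imp_le)
    ultimately show ?thesis by simp
  qed
  then have "loglik N Y w s \<le> real (card {..<N}) * ln G"
    unfolding loglik_def by (intro sum_bounded_above) auto
  then show ?thesis
    by (simp add: G_def)
qed

lemma min_bandwidth_tendsto_0:
  fixes X :: "nat \<Rightarrow> 'a::euclidean_space" and w s :: "nat \<Rightarrow> nat \<Rightarrow> real"
  assumes adm: "\<forall>n. admissible N (w n) (s n)"
    and lim: "filterlim (\<lambda>n. loglik N X (w n) (s n)) at_top sequentially"
  shows "(\<lambda>n. Min (s n ` {..<N})) \<longlonglongrightarrow> 0"
proof (cases "N = 0")
  case True
  then show ?thesis
    using lim by (simp add: loglik_def filterlim_at_top) (meson not_one_le_zero)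
next
  case False
  show ?thesis
  proof (rule tendstoI)
    fix e :: real assume e: "0 < e"
    define C where "C = real N * ln ((2 * pi * e\<^sup>2) powr (- real DIM('a) / 2))"
    have "eventually (\<lambda>n. C < loglik N X (w n) (s n)) sequentially"
      using lim by (simp add: filterlim_at_top_dense)
    then show "eventually (\<lambda>n. dist (Min (s n ` {..<N})) 0 < e) sequentially"
    proof (rule eventually_mono)
      fix n assume n: "C < loglik N X (w n) (s n)"
      have "\<not> (\<forall>j<N. e \<le> s n j)"
        using n loglik_le_of_bandwidth_ge[OF e adm[rule_format, of n], where Y = X] by (auto simp: C_def)
      then have "Min (s n ` {..<N}) < e"
        using False by (subst Min_less_iff) (auto simp: not_le)
      moreover have "0 < Min (s n ` {..<N})"
        using False adm unfolding admissible_def by (subst Min_gr_iff) auto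
      ultimately show "dist (Min (s n ` {..<N})) 0 < e" by simp
    qed
  qed
qed

lemma inj_on_separated:
  fixes X :: "nat \<Rightarrow> 'a::euclidean_space"
  assumes "inj_on X {..<N}"
  obtains m where "m > 0" "\<forall>i<N. \<forall>j<N. i \<noteq> j \<longrightarrow> m \<le> norm (X i - X j)"
proof -
  define D where "D = (\<lambda>(i, j). norm (X i - X j)) ` {(i, j). i < N \<and> j < N \<and> i \<noteq> j}"
  have fin: "finite D"
    unfolding D_def by (rule finite_imageI) (auto intro: finite_subset[of _ "{..<N} \<times> {..<N}"])
  have pos: "\<forall>r\<in>D. 0 < r"
    unfolding D_def using assms by (auto simp: inj_on_def)
  have "norm (X i - X j) \<in> D" if "i < N" "j < N" "i \<noteq> j" for i j
    using that unfolding D_def by force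
  then show ?thesis
    using fin pos by (intro that[of "Min (insert 1 D)"]) auto
qed

definition loo_pkde :: "nat \<Rightarrow> (nat \<Rightarrow> 'a::euclidean_space) \<Rightarrow> (nat \<Rightarrow> real) \<Rightarrow> (nat \<Rightarrow> real) \<Rightarrow> nat \<Rightarrow> real"
  where "loo_pkde N X w s i = (\<Sum>j\<in>{..<N} - {i}. w j * gauss (X i) (X j) (s j))"

lemma loglik_loo_eq_sum_ln_loo_pkde:
  "loglik_loo N X w s = (\<Sum>i<N. ln (loo_pkde N X w s i))"
  by (simp add: loglik_loo_def loo_pkde_def)

lemma ex_other_index: "2 \<le> (N::nat) \<Longrightarrow> \<exists>k<N. k \<noteq> i"
  by (rule exI[of _ "if i = 0 then 1 else 0"]) auto

lemma loo_pkde_pos: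
  assumes "N \<ge> 2" "admissible N w s" "i < N"
  shows "loo_pkde N X w s i > 0"
proof -
  obtain k where "k < N" "k \<noteq> i"
    using ex_other_index[OF assms(1)] by blast
  then show ?thesis
    unfolding loo_pkde_def using assms(2)
    by (intro sum_pos2[of _ k]) (auto simp: admissible_def gauss_pos intro: mult_nonneg_nonneg gauss_nonneg less_imp_le)
qed

lemma loglik_loo_le:
  fixes X :: "nat \<Rightarrow> 'a::euclidean_space"
  assumes N: "N \<ge> 2" and m: "m > 0" and sep: "\<forall>i<N. \<forall>j<N. i \<noteq> j \<longrightarrow> m \<le> norm (X i - X j)"
    and adm: "admissible N w s"
  shows "loglik_loo N X w s \<le> real N * ln ((real DIM('a) / (2 * pi * m\<^sup>2)) powr (real DIM('a) / 2))"
proof -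
  define B where "B = (real DIM('a) / (2 * pi * m\<^sup>2)) powr (real DIM('a) / 2)"
  have w: "\<forall>j<N. w j > 0" "(\<Sum>j<N. w j) = 1" and s: "\<forall>j<N. s j > 0"
    using adm unfolding admissible_def by auto
  have gauss_le_B: "gauss (X i) (X j) (s j) \<le> B" if "i < N" "j < N" "i \<noteq> j" for i j
  proof -
    have r: "m \<le> norm (X i - X j)"
      using sep that by auto
    then have "gauss (X i) (X j) (s j) \<le> (real DIM('a) / (2 * pi * (norm (X i - X j))\<^sup>2)) powr (real DIM('a) / 2)"
      using m s that by (intro gauss_le_off_centre) auto
    also have "\<dots> \<le> B"
      unfolding B_def
    proof (intro powr_mono2 divide_left_mono mult_left_mono)
      show "m\<^sup>2 \<le> (norm (X i - X j))\<^sup>2"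
        using m r by (intro power_mono) auto
    qed (use m r in \<open>auto simp: zero_less_mult_iff\<close>)
    finally show ?thesis .
  qed
  have "ln (loo_pkde N X w s i) \<le> ln B" if i: "i < N" for i
  proof -
    have "(\<Sum>j\<in>{..<N} - {i}. w j) \<le> (\<Sum>j<N. w j)"
      using w by (intro sum_mono2) (auto simp: less_imp_le)
    then have "loo_pkde N X w s i \<le> B"
      unfolding loo_pkde_def B_def[symmetric] using w i gauss_le_B
      by (intro weighted_sum_le_bound) (auto simp: B_def less_imp_le)
    then show ?thesis
      using loo_pkde_pos[OF N adm i, where X = X] by simp
  qed
  then have "loglik_loo N X w s \<le> real (card {..<N}) * ln B"
    unfolding loglik_loo_eq_sum_ln_loo_pkde by (intro sum_bounded_above) auto
  then show ?thesis
    by (simp add: B_def)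
qed

lemma loglik_loo_less_raising_bandwidth:
  fixes X :: "nat \<Rightarrow> 'a::euclidean_space" and m :: real
  defines "e \<equiv> m / sqrt (real DIM('a))"
  assumes N: "N \<ge> 2" and m: "m > 0" and sep: "\<forall>i<N. \<forall>j<N. i \<noteq> j \<longrightarrow> m \<le> norm (X i - X j)"
    and adm: "admissible N w s" and j: "j < N" "s j < e"
  shows "loglik_loo N X w s < loglik_loo N X w (s(j := e))"
proof -
  define s' where "s' = s(j := e)"
  have w: "\<forall>k<N. w k > 0" and s: "\<forall>k<N. s k > 0"
    using adm unfolding admissible_def by auto
  have gain: "w j * gauss (X i) (X j) (s j) < w j * gauss (X i) (X j) (s' j)"
    if "i < N" "i \<noteq> j" for i
  proof -
    have "real DIM('a) * e\<^sup>2 = m\<^sup>2"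
      unfolding e_def by (simp add: power_divide)
    also have "\<dots> \<le> (norm (X i - X j))\<^sup>2"
      using sep that j m by (intro power_mono) auto
    finally show ?thesis
      using j s w unfolding s'_def by (simp add: gauss_strict_mono_bandwidth)
  qed
  have term_le: "w k * gauss (X i) (X k) (s k) \<le> w k * gauss (X i) (X k) (s' k)"
    if "i < N" "k \<in> {..<N} - {i}" for i k
    using gain[of i] that by (cases "k = j") (auto simp: s'_def)
  have "ln (loo_pkde N X w s i) \<le> ln (loo_pkde N X w s' i)" if "i < N" for i
  proof -
    have "loo_pkde N X w s i \<le> loo_pkde N X w s' i"
      unfolding loo_pkde_def using that term_le by (intro sum_mono) auto
    then show ?thesis
      using loo_pkde_pos[OF N adm that, where X = X] by simp
  qed
  moreover obtain i where i: "i < N" "i \<noteq> j"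
    using ex_other_index[OF N] by blast
  moreover have "ln (loo_pkde N X w s i) < ln (loo_pkde N X w s' i)"
  proof -
    have "loo_pkde N X w s i < loo_pkde N X w s' i"
      unfolding loo_pkde_def using i j term_le gain by (intro sum_strict_mono_ex1) auto
    then show ?thesis
      using loo_pkde_pos[OF N adm i(1), where X = X] by simp
  qed
  ultimately show ?thesis
    unfolding loglik_loo_eq_sum_ln_loo_pkde s'_def by (intro sum_strict_mono_ex1) auto
qed

theorem mainTheorem4:
  fixes N :: nat and X :: "nat \<Rightarrow> 'a::euclidean_space"
  shows
  \<comment> \<open>(i) divergence as one bandwidth shrinks\<close>
  "(\<forall>j'<N. \<forall>w s. (\<forall>j<N. w j > 0) \<and> (\<Sum>j<N. w j) = 1 \<and> (\<forall>j<N. j \<noteq> j' \<longrightarrow> s j > 0) \<longrightarrow>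
       filterlim (\<lambda>t. loglik N X w (s(j' := t))) at_top (at_right 0))
   \<and> (\<forall>\<epsilon>>0. \<exists>C. \<forall>(Y :: nat \<Rightarrow> 'a) w s. admissible N w s \<and> (\<forall>j<N. s j \<ge> \<epsilon>) \<longrightarrow>
       loglik N Y w s \<le> C)
   \<and> (\<forall>(w :: nat \<Rightarrow> nat \<Rightarrow> real) s. (\<forall>n. admissible N (w n) (s n)) \<and>
       filterlim (\<lambda>n. loglik N X (w n) (s n)) at_top sequentially \<longrightarrow>
       (\<lambda>n. Min (s n ` {..<N})) \<longlonglongrightarrow> 0)
   \<and> (N \<ge> 2 \<and> inj_on X {..<N} \<longrightarrow>
       (\<exists>C. \<forall>w s. admissible N w s \<longrightarrow> loglik_loo N X w s \<le> C)
     \<and> (\<exists>\<epsilon>>0. \<forall>w s. admissible N w s \<and>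
          (\<forall>w' s'. admissible N w' s' \<longrightarrow> loglik_loo N X w' s' \<le> loglik_loo N X w s) \<longrightarrow>
          (\<forall>j<N. s j \<ge> \<epsilon>)))"
proof (intro conjI allI impI)
  show "\<exists>C. \<forall>(Y :: nat \<Rightarrow> 'a) w s. admissible N w s \<and> (\<forall>j<N. s j \<ge> \<epsilon>) \<longrightarrow> loglik N Y w s \<le> C"
    if "\<epsilon> > 0" for \<epsilon> :: real
    using loglik_le_of_bandwidth_ge[OF that] by blast
next
  assume dist: "N \<ge> 2 \<and> inj_on X {..<N}"
  then obtain m where m: "m > 0" and sep: "\<forall>i<N. \<forall>j<N. i \<noteq> j \<longrightarrow> m \<le> norm (X i - X j)"
    using inj_on_separated by blast
  show "\<exists>C. \<forall>w s. admissible N w s \<longrightarrow> loglik_loo N X w s \<le> C"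
    using loglik_loo_le[OF _ m sep] dist by blast
  show "\<exists>\<epsilon>>0. \<forall>w s. admissible N w s \<and>
      (\<forall>w' s'. admissible N w' s' \<longrightarrow> loglik_loo N X w' s' \<le> loglik_loo N X w s) \<longrightarrow>
      (\<forall>j<N. s j \<ge> \<epsilon>)"
  proof (intro exI[of _ "m / sqrt (real DIM('a))"] conjI allI impI)
    fix w s j
    assume "admissible N w s \<and>
        (\<forall>w' s'. admissible N w' s' \<longrightarrow> loglik_loo N X w' s' \<le> loglik_loo N X w s)" "j < N"
    moreover from this have "admissible N w (s(j := m / sqrt (real DIM('a))))"
      using m by (auto simp: admissible_def)
    ultimately show "m / sqrt (real DIM('a)) \<le> s j"
      using loglik_loo_less_raising_bandwidth[OF _ m sep] dist by force
  qed (use m in simp)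
qed (use loglik_tendsto_at_top_as_bandwidth_vanishes min_bandwidth_tendsto_0 in blast)+

end
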